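(* Let $\Bbbk$ be an algebraically closed field of characteristic zero, $G$ a finite group, $\chi:G\to\Bbbk^\times$ a linear character, $g\in Z(G)$, $n\geq2$ the multiplicative order of $\chi(g)$, and let $H$ be either the $\Bbbk$-algebra generated by $\Bbbk G$ and $z$ with relations $z^n=0$, $zs=\chi(s)sz$ ($s\in G$), or (when $\chi^n=1$ and $g^n\neq1$) the $\Bbbk$-algebra generated by $\Bbbk G$ and $z$ with relations $z^n=g^n-1$, $zs=\chi(s)sz$ ($s\in G$). Then $z^{l+1}\in(z^l(1-e_s))$ for all $0\leq s\leq p-1$ and $0\leq l\leq n-1$.
   Context: $\chi_0,\dots,\chi_{p-1}$ are the irreducible characters of $G$ and $e_s=\frac{\chi_s(1)}{|G|}\sum_{h\in G}\chi_s(h)h^{-1}$. $(a)$ denotes the two-sided ideal of $H$ generated by $a$. *)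

theory Defs
  imports "HOL-Algebra.Group" "Jordan_Normal_Form.Matrix" "HOL-Computational_Algebra.Polynomial"
begin

definition alg_closed_field :: "'k::field itself \<Rightarrow> bool" where
  "alg_closed_field _ \<longleftrightarrow> (\<forall>q :: 'k poly. degree q \<ge> 1 \<longrightarrow> (\<exists>x. poly q x = 0))"

definition k_algebra_map :: "('k::field \<Rightarrow> 'a::ring_1) \<Rightarrow> bool" where
  "k_algebra_map \<iota> \<longleftrightarrow> \<iota> 1 = 1 \<and> (\<forall>x y. \<iota> (x + y) = \<iota> x + \<iota> y) \<and>
     (\<forall>x y. \<iota> (x * y) = \<iota> x * \<iota> y) \<and> (\<forall>c a. \<iota> c * a = a * \<iota> c)"

definition two_sided_ideal_gen :: "'a::ring_1 \<Rightarrow> 'a set" where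
  "two_sided_ideal_gen a = {x. \<exists>xs :: ('a \<times> 'a) list. x = sum_list (map (\<lambda>(u,v). u * a * v) xs)}"

definition mat_rep :: "('g, 'm) monoid_scheme \<Rightarrow> nat \<Rightarrow> ('g \<Rightarrow> 'k::field mat) \<Rightarrow> bool" where
  "mat_rep G d \<rho> \<longleftrightarrow> (\<forall>s\<in>carrier G. \<rho> s \<in> carrier_mat d d) \<and> \<rho> \<one>\<^bsub>G\<^esub> = 1\<^sub>m d \<and>
     (\<forall>s\<in>carrier G. \<forall>t\<in>carrier G. \<rho> (s \<otimes>\<^bsub>G\<^esub> t) = \<rho> s * \<rho> t)"

definition is_subspace_vec :: "nat \<Rightarrow> 'k::field vec set \<Rightarrow> bool" where
  "is_subspace_vec d W \<longleftrightarrow> W \<subseteq> carrier_vec d \<and> 0\<^sub>v d \<in> W \<and>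
     (\<forall>v\<in>W. \<forall>w\<in>W. v + w \<in> W) \<and> (\<forall>c. \<forall>v\<in>W. c \<cdot>\<^sub>v v \<in> W)"

definition irr_mat_rep :: "('g, 'm) monoid_scheme \<Rightarrow> nat \<Rightarrow> ('g \<Rightarrow> 'k::field mat) \<Rightarrow> bool" where
  "irr_mat_rep G d \<rho> \<longleftrightarrow> d > 0 \<and> mat_rep G d \<rho> \<and>
     (\<forall>W. is_subspace_vec d W \<and> (\<forall>s\<in>carrier G. \<forall>w\<in>W. \<rho> s *\<^sub>v w \<in> W)
        \<longrightarrow> W = {0\<^sub>v d} \<or> W = carrier_vec d)"

definition irr_char :: "('g, 'm) monoid_scheme \<Rightarrow> ('g \<Rightarrow> 'k::field) \<Rightarrow> bool" where
  "irr_char G \<psi> \<longleftrightarrow> (\<exists>d (\<rho> :: 'g \<Rightarrow> 'k mat). irr_mat_rep G d \<rho> \<and> (\<forall>s\<in>carrier G. \<psi> s = (\<Sum>i<d. \<rho> s $$ (i, i))))"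

text \<open>The central idempotent e_psi = psi(1)/|G| sum_h psi(h) h^{-1}, mapped into the algebra.\<close>
definition char_idem :: "('g, 'm) monoid_scheme \<Rightarrow> ('k::field \<Rightarrow> 'a::ring_1) \<Rightarrow> ('g \<Rightarrow> 'a) \<Rightarrow> ('g \<Rightarrow> 'k) \<Rightarrow> 'a" where
  "char_idem G \<iota> \<phi> \<psi> = \<iota> (\<psi> \<one>\<^bsub>G\<^esub> / of_nat (card (carrier G))) *
     (\<Sum>h\<in>carrier G. \<iota> (\<psi> h) * \<phi> (inv\<^bsub>G\<^esub> h))"

end

theory Submission
  imports Defs "Jordan_Normal_Form.Char_Poly"
begin

(*
  Since g is central, Schur's lemma makes it act by a scalar c \<noteq> 0 in the irreducible
  representation, so e = e_s satisfies e g = c e. The relation z s = \<chi>(s) s z gives e z = z f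
  for the twisted element f = \<psi>(1)/|G| \<Sum>_h \<psi>(h) \<chi>(h) h\<inverse>, and f g = c \<chi>(g) f.
  Both z^(l+1) (1 - e) = z \<cdot> z^l (1 - e) and z^(l+1) (1 - f) = z^l (1 - e) \<cdot> z lie in the
  ideal. Multiplying them on the right by g - c and g - c \<chi>(g) kills e and f, so the ideal
  contains z^(l+1) (g - c) and z^(l+1) (g - c \<chi>(g)), whose difference is the invertible
  scalar c (\<chi>(g) - 1) times z^(l+1).
*)

lemma eigenspace_is_subspace_vec:
  assumes "A \<in> carrier_mat d d"
  shows "is_subspace_vec d {w \<in> carrier_vec d. A *\<^sub>v w = c \<cdot>\<^sub>v w}"
  unfolding is_subspace_vec_def using assms
  by (auto simp: mult_add_distrib_mat_vec mult_mat_vec smult_add_distrib_vec smult_smult_assoc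
      mult.commute)

lemma alg_closed_field_eigenvector_exists:
  fixes A :: "'k::field mat"
  assumes "alg_closed_field TYPE('k)" and A: "A \<in> carrier_mat d d" and "d > 0"
  shows "\<exists>c v. eigenvector A v c"
proof -
  have "degree (char_poly A) \<ge> 1" using degree_monic_char_poly[OF A] \<open>d > 0\<close> by simp
  then obtain c where "poly (char_poly A) c = 0"
    using assms(1) unfolding alg_closed_field_def by blast
  then show ?thesis using eigenvalue_root_char_poly[OF A] unfolding eigenvalue_def by blast
qed

lemma eq_smult_one_matI:
  fixes A :: "'a::comm_ring_1 mat"
  assumes A: "A \<in> carrier_mat d d" and eigen: "\<forall>v\<in>carrier_vec d. A *\<^sub>v v = c \<cdot>\<^sub>v v"
  shows "A = c \<cdot>\<^sub>m 1\<^sub>m d"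
proof (rule eq_matI)
  fix i j assume "i < dim_row (c \<cdot>\<^sub>m 1\<^sub>m d)" and "j < dim_col (c \<cdot>\<^sub>m 1\<^sub>m d)"
  then have ij: "i < d" "j < d" by auto
  have "col A j = A *\<^sub>v unit_vec d j"
    using col_mult2[OF A one_carrier_mat ij(2)] A ij(2) by (simp add: right_mult_one_mat)
  then have "A $$ (i, j) = (c \<cdot>\<^sub>v unit_vec d j) $ i"
    using A ij eigen by (metis carrier_matD index_col unit_vec_carrier)
  then show "A $$ (i, j) = (c \<cdot>\<^sub>m 1\<^sub>m d) $$ (i, j)" using ij by simp
qed (use A in auto)

lemma irr_mat_rep_central_scalar:
  fixes G :: "('g, 'm) monoid_scheme" and \<rho> :: "'g \<Rightarrow> 'k::field mat"
  assumes "alg_closed_field TYPE('k)" and irr: "irr_mat_rep G d \<rho>"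
    and g: "g \<in> carrier G" and central: "\<forall>s\<in>carrier G. g \<otimes>\<^bsub>G\<^esub> s = s \<otimes>\<^bsub>G\<^esub> g"
  shows "\<exists>c. \<rho> g = c \<cdot>\<^sub>m 1\<^sub>m d"
proof -
  have car: "\<And>s. s \<in> carrier G \<Longrightarrow> \<rho> s \<in> carrier_mat d d"
    and mult: "\<And>s t. s \<in> carrier G \<Longrightarrow> t \<in> carrier G \<Longrightarrow> \<rho> (s \<otimes>\<^bsub>G\<^esub> t) = \<rho> s * \<rho> t"
    using irr unfolding irr_mat_rep_def mat_rep_def by auto
  have A: "\<rho> g \<in> carrier_mat d d" using car g .
  obtain c v where v: "eigenvector (\<rho> g) v c"
    using alg_closed_field_eigenvector_exists[OF assms(1) A] irr unfolding irr_mat_rep_def by blast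
  define W where "W = {w \<in> carrier_vec d. \<rho> g *\<^sub>v w = c \<cdot>\<^sub>v w}"
  have "\<rho> s *\<^sub>v w \<in> W" if s: "s \<in> carrier G" and w: "w \<in> W" for s w
  proof -
    have w': "w \<in> carrier_vec d" "\<rho> g *\<^sub>v w = c \<cdot>\<^sub>v w" using w unfolding W_def by auto
    have "\<rho> g * \<rho> s = \<rho> s * \<rho> g" using mult[OF g s] mult[OF s g] central s by metis
    then have "\<rho> g *\<^sub>v (\<rho> s *\<^sub>v w) = \<rho> s *\<^sub>v (\<rho> g *\<^sub>v w)"
      using A car[OF s] w' by (metis assoc_mult_mat_vec)
    also have "\<dots> = c \<cdot>\<^sub>v (\<rho> s *\<^sub>v w)" using w' car[OF s] by (simp add: mult_mat_vec)
    finally show ?thesis unfolding W_def using car[OF s] w' by auto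
  qed
  moreover have "v \<in> W" "v \<noteq> 0\<^sub>v d" using v A unfolding W_def eigenvector_def by auto
  ultimately have "W = carrier_vec d"
    using irr eigenspace_is_subspace_vec[OF A] unfolding irr_mat_rep_def W_def by blast
  then show ?thesis using eq_smult_one_matI[OF A] unfolding W_def by blast
qed

lemma irr_char_central_mult:
  fixes G :: "('g, 'm) monoid_scheme" and \<psi> :: "'g \<Rightarrow> 'k::field"
  assumes "alg_closed_field TYPE('k)" and "group G" and "irr_char G \<psi>"
    and g: "g \<in> carrier G" and "\<forall>s\<in>carrier G. g \<otimes>\<^bsub>G\<^esub> s = s \<otimes>\<^bsub>G\<^esub> g"
  shows "\<exists>c. c \<noteq> 0 \<and> (\<forall>h\<in>carrier G. \<psi> (g \<otimes>\<^bsub>G\<^esub> h) = c * \<psi> h)"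
proof -
  interpret group G by fact
  obtain d and \<rho> :: "'g \<Rightarrow> 'k mat" where irr: "irr_mat_rep G d \<rho>"
    and \<psi>: "\<forall>s\<in>carrier G. \<psi> s = (\<Sum>i<d. \<rho> s $$ (i, i))"
    using \<open>irr_char G \<psi>\<close> unfolding irr_char_def by blast
  have car: "\<And>s. s \<in> carrier G \<Longrightarrow> \<rho> s \<in> carrier_mat d d"
    and mult: "\<And>s t. s \<in> carrier G \<Longrightarrow> t \<in> carrier G \<Longrightarrow> \<rho> (s \<otimes>\<^bsub>G\<^esub> t) = \<rho> s * \<rho> t"
    and "\<rho> \<one>\<^bsub>G\<^esub> = 1\<^sub>m d" and "d > 0"
    using irr unfolding irr_mat_rep_def mat_rep_def by auto
  obtain c where c: "\<rho> g = c \<cdot>\<^sub>m 1\<^sub>m d"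
    using irr_mat_rep_central_scalar[OF assms(1) irr assms(4,5)] by blast
  have mult_g: "\<rho> (g \<otimes>\<^bsub>G\<^esub> h) = c \<cdot>\<^sub>m \<rho> h" if "h \<in> carrier G" for h
    using mult[OF g that] car[OF that] c by (simp add: mult_smult_assoc_mat[OF one_carrier_mat])
  have "c \<noteq> 0"
  proof
    assume "c = 0"
    then have "\<rho> \<one>\<^bsub>G\<^esub> $$ (0, 0) = 0"
      using mult_g[of "inv\<^bsub>G\<^esub> g"] car[of "inv\<^bsub>G\<^esub> g"] g \<open>d > 0\<close> by simp
    then show False using \<open>\<rho> \<one>\<^bsub>G\<^esub> = 1\<^sub>m d\<close> \<open>d > 0\<close> by simp
  qed
  moreover have "\<psi> (g \<otimes>\<^bsub>G\<^esub> h) = c * \<psi> h" if "h \<in> carrier G" for h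
    using \<psi> mult_g[OF that] car[OF that] that g by (simp add: sum_distrib_left)
  ultimately show ?thesis by blast
qed

lemma two_sided_ideal_gen_generator: "u * a * v \<in> two_sided_ideal_gen a"
  unfolding two_sided_ideal_gen_def by (rule CollectI, rule exI[of _ "[(u, v)]"]) simp

lemma two_sided_ideal_gen_add:
  assumes "x \<in> two_sided_ideal_gen a" and "y \<in> two_sided_ideal_gen a"
  shows "x + y \<in> two_sided_ideal_gen a"
proof -
  obtain xs ys where "x = sum_list (map (\<lambda>(u, v). u * a * v) xs)"
    and "y = sum_list (map (\<lambda>(u, v). u * a * v) ys)"
    using assms unfolding two_sided_ideal_gen_def by blast
  then have "x + y = sum_list (map (\<lambda>(u, v). u * a * v) (xs @ ys))" by simp
  then show ?thesis unfolding two_sided_ideal_gen_def by blast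
qed

lemma two_sided_ideal_gen_mult:
  assumes "x \<in> two_sided_ideal_gen a"
  shows "u * x * v \<in> two_sided_ideal_gen a"
proof -
  obtain xs where x: "x = sum_list (map (\<lambda>(p, q). p * a * q) xs)"
    using assms unfolding two_sided_ideal_gen_def by blast
  have "u * x * v = sum_list (map (\<lambda>(p, q). p * a * q) (map (\<lambda>(p, q). (u * p, q * v)) xs))"
    unfolding x by (induction xs) (auto simp: algebra_simps)
  then show ?thesis unfolding two_sided_ideal_gen_def by blast
qed

lemma two_sided_ideal_gen_diff:
  assumes "x \<in> two_sided_ideal_gen a" and "y \<in> two_sided_ideal_gen a"
  shows "x - y \<in> two_sided_ideal_gen a"
  using two_sided_ideal_gen_add[OF assms(1) two_sided_ideal_gen_mult[OF assms(2), of "-1" 1]] by simp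

definition inv_weighted_sum ::
    "('g, 'm) monoid_scheme \<Rightarrow> ('k::field \<Rightarrow> 'a::ring_1) \<Rightarrow> ('g \<Rightarrow> 'a) \<Rightarrow> ('g \<Rightarrow> 'k) \<Rightarrow> 'a" where
  "inv_weighted_sum G \<iota> \<phi> \<alpha> = (\<Sum>h\<in>carrier G. \<iota> (\<alpha> h) * \<phi> (inv\<^bsub>G\<^esub> h))"

context
  fixes \<iota> :: "'k::field \<Rightarrow> 'a::ring_1"
  assumes \<iota>: "k_algebra_map \<iota>"
begin

lemma k_algebra_map_one: "\<iota> 1 = 1"
  and k_algebra_map_add: "\<iota> (x + y) = \<iota> x + \<iota> y"
  and k_algebra_map_mult: "\<iota> (x * y) = \<iota> x * \<iota> y"
  and k_algebra_map_commute: "\<iota> x * a = a * \<iota> x"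
  using \<iota> unfolding k_algebra_map_def by blast+

lemma k_algebra_map_diff: "\<iota> (x - y) = \<iota> x - \<iota> y"
  using k_algebra_map_add[of "x - y" y] by (simp add: algebra_simps)

lemma two_sided_ideal_gen_cancel_scalar:
  assumes "x * \<iota> c \<in> two_sided_ideal_gen a" and "c \<noteq> 0"
  shows "x \<in> two_sided_ideal_gen a"
proof -
  have "1 * (x * \<iota> c) * \<iota> (inverse c) = x"
    using \<open>c \<noteq> 0\<close> by (simp add: mult.assoc k_algebra_map_mult[symmetric] k_algebra_map_one)
  then show ?thesis using two_sided_ideal_gen_mult[OF assms(1)] by metis
qed

lemma two_sided_ideal_gen_absorb_eigen:
  assumes "x * (1 - e) \<in> two_sided_ideal_gen a" and "e * t = \<iota> c * e"
  shows "x * (t - \<iota> c) \<in> two_sided_ideal_gen a"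
proof -
  have "x * (1 - e) * (t - \<iota> c) = x * (t - \<iota> c) - x * (e * t - e * \<iota> c)"
    by (simp add: algebra_simps)
  also have "\<dots> = x * (t - \<iota> c)"
    using assms(2) k_algebra_map_commute[of c e] by simp
  finally show ?thesis using two_sided_ideal_gen_mult[OF assms(1), of 1 "t - \<iota> c"] by simp
qed

lemma two_sided_ideal_gen_of_distinct_eigen:
  assumes "x * (1 - e) \<in> two_sided_ideal_gen a" and "e * t = \<iota> b * e"
    and "x * (1 - f) \<in> two_sided_ideal_gen a" and "f * t = \<iota> c * f" and "b \<noteq> c"
  shows "x \<in> two_sided_ideal_gen a"
proof -
  have "x * (t - \<iota> b) - x * (t - \<iota> c) \<in> two_sided_ideal_gen a"
    using assms two_sided_ideal_gen_absorb_eigen two_sided_ideal_gen_diff by blast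
  moreover have "x * (t - \<iota> b) - x * (t - \<iota> c) = x * \<iota> (c - b)"
    by (simp add: k_algebra_map_diff algebra_simps)
  ultimately show ?thesis using two_sided_ideal_gen_cancel_scalar \<open>b \<noteq> c\<close> by simp
qed

lemma inv_weighted_sum_smult:
  "inv_weighted_sum G \<iota> \<phi> (\<lambda>h. c * \<alpha> h) = \<iota> c * inv_weighted_sum G \<iota> \<phi> \<alpha>"
  unfolding inv_weighted_sum_def sum_distrib_left by (simp add: k_algebra_map_mult mult.assoc)

lemma char_idem_eq_inv_weighted_sum:
  "char_idem G \<iota> \<phi> \<psi> =
     inv_weighted_sum G \<iota> \<phi> (\<lambda>h. \<psi> \<one>\<^bsub>G\<^esub> / of_nat (card (carrier G)) * \<psi> h)"
  unfolding char_idem_def inv_weighted_sum_smult by (simp add: inv_weighted_sum_def)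

lemma inv_weighted_sum_mult_right:
  fixes G :: "('g, 'm) monoid_scheme"
  assumes "group G" and g: "g \<in> carrier G"
    and \<phi>: "\<forall>s\<in>carrier G. \<forall>t\<in>carrier G. \<phi> (s \<otimes>\<^bsub>G\<^esub> t) = \<phi> s * \<phi> t"
  shows "inv_weighted_sum G \<iota> \<phi> \<alpha> * \<phi> g = inv_weighted_sum G \<iota> \<phi> (\<lambda>h. \<alpha> (g \<otimes>\<^bsub>G\<^esub> h))"
proof -
  interpret group G by fact
  have "inv_weighted_sum G \<iota> \<phi> \<alpha> * \<phi> g
      = (\<Sum>h\<in>carrier G. \<iota> (\<alpha> h) * \<phi> (inv\<^bsub>G\<^esub> h \<otimes>\<^bsub>G\<^esub> g))"
    unfolding inv_weighted_sum_def sum_distrib_right using g \<phi>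
    by (auto simp: mult.assoc intro!: sum.cong)
  also have "\<dots> = (\<Sum>h\<in>carrier G. \<iota> (\<alpha> (g \<otimes>\<^bsub>G\<^esub> h)) * \<phi> (inv\<^bsub>G\<^esub> (g \<otimes>\<^bsub>G\<^esub> h) \<otimes>\<^bsub>G\<^esub> g))"
    using sum.reindex[of "(\<otimes>\<^bsub>G\<^esub>) g" "carrier G"] surj_const_mult[OF g] g
    by (simp add: inj_on_def)
  also have "\<dots> = inv_weighted_sum G \<iota> \<phi> (\<lambda>h. \<alpha> (g \<otimes>\<^bsub>G\<^esub> h))"
    unfolding inv_weighted_sum_def using g by (intro sum.cong) (auto simp: inv_mult_group m_assoc)
  finally show ?thesis .
qed

lemma inv_weighted_sum_mult_eigen:
  fixes G :: "('g, 'm) monoid_scheme"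
  assumes "group G" and "g \<in> carrier G"
    and "\<forall>s\<in>carrier G. \<forall>t\<in>carrier G. \<phi> (s \<otimes>\<^bsub>G\<^esub> t) = \<phi> s * \<phi> t"
    and "\<forall>h\<in>carrier G. \<alpha> (g \<otimes>\<^bsub>G\<^esub> h) = c * \<alpha> h"
  shows "inv_weighted_sum G \<iota> \<phi> \<alpha> * \<phi> g = \<iota> c * inv_weighted_sum G \<iota> \<phi> \<alpha>"
proof -
  have "inv_weighted_sum G \<iota> \<phi> (\<lambda>h. \<alpha> (g \<otimes>\<^bsub>G\<^esub> h)) = inv_weighted_sum G \<iota> \<phi> (\<lambda>h. c * \<alpha> h)"
    using assms(4) unfolding inv_weighted_sum_def by (intro sum.cong) auto
  then show ?thesis using inv_weighted_sum_mult_right[OF assms(1-3)] inv_weighted_sum_smult by simp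
qed

text \<open>Moving \<open>z\<close> past \<open>\<phi> (h\<inverse>)\<close> produces the scalar \<open>\<chi> (h\<inverse>) = (\<chi> h)\<inverse>\<close>, which
  the twisted weight \<open>\<alpha> h * \<chi> h\<close> cancels.\<close>
lemma inv_weighted_sum_skew_commute:
  fixes G :: "('g, 'm) monoid_scheme"
  assumes "group G"
    and \<chi>_mult: "\<forall>s\<in>carrier G. \<forall>t\<in>carrier G. \<chi> (s \<otimes>\<^bsub>G\<^esub> t) = \<chi> s * \<chi> t"
    and \<chi>_nonzero: "\<forall>s\<in>carrier G. \<chi> s \<noteq> 0"
    and z: "\<forall>s\<in>carrier G. z * \<phi> s = \<iota> (\<chi> s) * \<phi> s * z"
  shows "inv_weighted_sum G \<iota> \<phi> \<alpha> * z = z * inv_weighted_sum G \<iota> \<phi> (\<lambda>h. \<alpha> h * \<chi> h)"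
proof -
  interpret group G by fact
  have "\<chi> \<one>\<^bsub>G\<^esub> = 1" using \<chi>_mult \<chi>_nonzero by (metis one_closed r_one mult_cancel_left2)
  have "z * (\<iota> (\<alpha> h * \<chi> h) * \<phi> (inv\<^bsub>G\<^esub> h)) = \<iota> (\<alpha> h) * \<phi> (inv\<^bsub>G\<^esub> h) * z"
    if h: "h \<in> carrier G" for h
  proof -
    have "\<chi> h * \<chi> (inv\<^bsub>G\<^esub> h) = 1" using \<chi>_mult h \<open>\<chi> \<one>\<^bsub>G\<^esub> = 1\<close> by (metis inv_closed r_inv)
    have "z * (\<iota> (\<alpha> h * \<chi> h) * \<phi> (inv\<^bsub>G\<^esub> h)) = \<iota> (\<alpha> h * \<chi> h) * (z * \<phi> (inv\<^bsub>G\<^esub> h))"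
      by (metis k_algebra_map_commute mult.assoc)
    also have "\<dots> = \<iota> (\<alpha> h * (\<chi> h * \<chi> (inv\<^bsub>G\<^esub> h))) * \<phi> (inv\<^bsub>G\<^esub> h) * z"
      using z h by (simp add: k_algebra_map_mult mult.assoc)
    finally show ?thesis using \<open>\<chi> h * \<chi> (inv\<^bsub>G\<^esub> h) = 1\<close> by simp
  qed
  then show ?thesis
    unfolding inv_weighted_sum_def sum_distrib_right sum_distrib_left by (intro sum.cong) auto
qed

end

theorem lemma4p1:
  fixes G :: "('g, 'm) monoid_scheme"
    and \<iota> :: "'k::field_char_0 \<Rightarrow> 'a::ring_1"
    and \<phi> :: "'g \<Rightarrow> 'a"
    and \<chi> :: "'g \<Rightarrow> 'k"
    and g :: 'g and z :: 'a and n :: nat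
  assumes "alg_closed_field TYPE('k)"
    and "group G" and "finite (carrier G)"
    and "\<forall>s\<in>carrier G. \<forall>t\<in>carrier G. \<chi> (s \<otimes>\<^bsub>G\<^esub> t) = \<chi> s * \<chi> t"
    and "\<forall>s\<in>carrier G. \<chi> s \<noteq> 0"
    and "g \<in> carrier G" and "\<forall>s\<in>carrier G. g \<otimes>\<^bsub>G\<^esub> s = s \<otimes>\<^bsub>G\<^esub> g"
    and "n \<ge> 2" and "\<chi> g ^ n = 1" and "\<forall>m. 0 < m \<and> m < n \<longrightarrow> \<chi> g ^ m \<noteq> 1"
    and "k_algebra_map \<iota>"
    and "\<phi> \<one>\<^bsub>G\<^esub> = 1"
    and "\<forall>s\<in>carrier G. \<forall>t\<in>carrier G. \<phi> (s \<otimes>\<^bsub>G\<^esub> t) = \<phi> s * \<phi> t"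
    and "\<forall>s\<in>carrier G. z * \<phi> s = \<iota> (\<chi> s) * \<phi> s * z"
    and "z ^ n = 0 \<or>
         ((\<forall>s\<in>carrier G. \<chi> s ^ n = 1) \<and> g [^]\<^bsub>G\<^esub> n \<noteq> \<one>\<^bsub>G\<^esub> \<and>
          z ^ n = \<phi> (g [^]\<^bsub>G\<^esub> n) - 1)"
    and "irr_char G \<psi>"
    and "l < n"
  shows "z ^ (l + 1) \<in> two_sided_ideal_gen (z ^ l * (1 - char_idem G \<iota> \<phi> \<psi>))"
proof -
  obtain c where "c \<noteq> 0" and \<psi>_g: "\<forall>h\<in>carrier G. \<psi> (g \<otimes>\<^bsub>G\<^esub> h) = c * \<psi> h"
    using irr_char_central_mult[OF assms(1,2,16,6,7)] by blast
  have "\<chi> g \<noteq> 1" using assms(8) assms(10)[rule_format, of 1] by simp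
  define \<alpha> where "\<alpha> h = \<psi> \<one>\<^bsub>G\<^esub> / of_nat (card (carrier G)) * \<psi> h" for h
  define e where "e = inv_weighted_sum G \<iota> \<phi> \<alpha>"
  define f where "f = inv_weighted_sum G \<iota> \<phi> (\<lambda>h. \<alpha> h * \<chi> h)"
  have e_idem: "char_idem G \<iota> \<phi> \<psi> = e"
    unfolding e_def \<alpha>_def using char_idem_eq_inv_weighted_sum[OF assms(11)] by simp
  have e_g: "e * \<phi> g = \<iota> c * e"
    unfolding e_def using \<psi>_g
    by (intro inv_weighted_sum_mult_eigen[OF assms(11,2,6,13)]) (simp add: \<alpha>_def ac_simps)
  have f_g: "f * \<phi> g = \<iota> (c * \<chi> g) * f"
    unfolding f_def using \<psi>_g assms(4,6)
    by (intro inv_weighted_sum_mult_eigen[OF assms(11,2,6,13)]) (simp add: \<alpha>_def ac_simps)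
  have e_z: "e * z = z * f"
    unfolding e_def f_def by (rule inv_weighted_sum_skew_commute[OF assms(11,2,4,5,14)])
  have "z ^ (l + 1) * (1 - e) = z * (z ^ l * (1 - e)) * 1"
    by (simp add: mult.assoc)
  moreover have "z ^ (l + 1) * (1 - f) = 1 * (z ^ l * (1 - e)) * z"
  proof -
    have "1 * (z ^ l * (1 - e)) * z = z ^ l * z - z ^ l * (e * z)"
      by (simp add: algebra_simps)
    also have "\<dots> = z ^ (l + 1) * (1 - f)"
      unfolding e_z by (simp add: right_diff_distrib power_commutes mult.assoc[symmetric])
    finally show ?thesis ..
  qed
  moreover have "c \<noteq> c * \<chi> g" using \<open>c \<noteq> 0\<close> \<open>\<chi> g \<noteq> 1\<close> by simp
  ultimately show ?thesis
    unfolding e_idem using two_sided_ideal_gen_of_distinct_eigen[OF assms(11) _ e_g _ f_g]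
    by (metis two_sided_ideal_gen_generator)
qed

end
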